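(* Let $r$ be a fixed positive integer, $n\ge3$, and let $V$ be a symmetric $n\times n$ matrix in $\mathcal L_n(1/b_n,1/c_n)$ with $b_n\ge c_n>0$. Let $S=\mathrm{diag}(1/v_{11},\dots,1/v_{nn})$, $W=V^{-1}-S$, and let $W_{22}$ be the bottom-right $(n-r)\times(n-r)$ block of $W$. Let $V_{22}$ be the bottom-right $(n-r)\times(n-r)$ block of $V$, $S_{22}=\mathrm{diag}(1/v_{r+1,r+1},\dots,1/v_{nn})$ and $\widetilde W_{22}=V_{22}^{-1}-S_{22}$. Then there is a constant $C$ depending only on $r$ such that for all sufficiently large $n$, $$\|W_{22}-\widetilde W_{22}\|_{\max}\le C\frac{b_n^6}{n^3c_n^5}.$$
   Context: For $m,M>0$, $\mathcal L_n(m,M)$ is the class of $n\times n$ matrices $V=(v_{ij})$ with $v_{ii}=\sum_{j\ne i}v_{ij}$ for $i=1,\dots,n$ and $m\le v_{ij}\le M$ for all $i\ne j$. $\|J\|_{\max}=\max_{i,j}|J_{ij}|$. *)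

theory Defs
  imports "Jordan_Normal_Form.Gauss_Jordan_Elimination"
begin

definition class_L :: "nat \<Rightarrow> real \<Rightarrow> real \<Rightarrow> real mat set" where
  "class_L n m M = {V. V \<in> carrier_mat n n
     \<and> (\<forall>i<n. V $$ (i,i) = (\<Sum>j\<in>{0..<n} - {i}. V $$ (i,j)))
     \<and> (\<forall>i<n. \<forall>j<n. i \<noteq> j \<longrightarrow> m \<le> V $$ (i,j) \<and> V $$ (i,j) \<le> M)}"

definition mat_inv :: "real mat \<Rightarrow> real mat" where
  "mat_inv A = (case mat_inverse A of Some B \<Rightarrow> B | None \<Rightarrow> 0\<^sub>m (dim_row A) (dim_col A))"

definition inv_diag :: "real mat \<Rightarrow> real mat" where
  "inv_diag A = mat (dim_row A) (dim_row A) (\<lambda>(i,j). if i = j then 1 / A $$ (i,i) else 0)"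

definition br_block :: "real mat \<Rightarrow> nat \<Rightarrow> real mat" where
  "br_block A r = mat (dim_row A - r) (dim_col A - r) (\<lambda>(i,j). A $$ (i + r, j + r))"

definition max_norm :: "real mat \<Rightarrow> real" where
  "max_norm A = Max {\<bar>A $$ (i,j)\<bar> | i j. i < dim_row A \<and> j < dim_col A}"

end

theory Submission
  imports Defs "Jordan_Normal_Form.Determinant"
begin

(* Write P = V^-1 and Q = V22^-1. The diagonal corrections cancel on the lower right block, so
   the difference is P22 - Q, and block elimination (V21 P11 + V22 P21 = 0 and
   P21 V12 + P22 V22 = 1) gives P22 - Q = U P11 U^T with U = Q V21, using the symmetry of V.
   Each entry is thus a sum of r^2 products of two entries of U and one entry of P11.

   These entries are controlled by coercivity. For a symmetric matrix with off-diagonal entries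
   at least m and weakly dominant diagonal, u^T A u dominates
   (1/2) sum_{i <> j} a_ij (u_i + u_j)^2 >= m (N - 2) |u|^2, and V22 inherits these properties.
   Testing the form on the columns of P gives |p_ij| <= 1 / (m (n - 2)). For a column u of U
   it gives sum_i |u_i| <= 3 M / m, and then row i of V22 u = (column of V21) gives
   (n - 1) m |u_i| <= M + 3 M^2 / m. With m = 1/b and M = 1/c the entries of P22 - Q are at most
   r^2 (4 b^2 / (c^2 (n - 1)))^2 b / (n - 2) <= 112 r^2 b^6 / (n^3 c^5). *)

lemma sum_off_diagonal_squares:
  fixes x :: "nat \<Rightarrow> real"
  shows "(\<Sum>i\<in>{0..<n}. \<Sum>j\<in>{0..<n} - {i}. (x i + x j)\<^sup>2)
    = 2 * (real n - 2) * (\<Sum>i\<in>{0..<n}. (x i)\<^sup>2) + 2 * (\<Sum>i\<in>{0..<n}. x i)\<^sup>2"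
proof -
  have "(\<Sum>i\<in>{0..<n}. \<Sum>j\<in>{0..<n} - {i}. (x i + x j)\<^sup>2)
      = (\<Sum>i\<in>{0..<n}. (\<Sum>j\<in>{0..<n}. (x i + x j)\<^sup>2) - 4 * (x i)\<^sup>2)"
    by (intro sum.cong refl) (simp add: sum_diff1 power2_eq_square algebra_simps)
  also have "\<dots> = 2 * (real n - 2) * (\<Sum>i\<in>{0..<n}. (x i)\<^sup>2) + 2 * (\<Sum>i\<in>{0..<n}. x i)\<^sup>2"
    by (simp add: power2_sum sum.distrib sum_subtractf sum_distrib_left sum_distrib_right
        power2_eq_square algebra_simps)
  finally show ?thesis .
qed

lemma sum_abs_squared_le:
  fixes x :: "nat \<Rightarrow> real"
  shows "(\<Sum>i\<in>{0..<n}. \<bar>x i\<bar>)\<^sup>2 \<le> real n * (\<Sum>i\<in>{0..<n}. (x i)\<^sup>2)"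
proof -
  have "0 \<le> (\<Sum>i\<in>{0..<n}. \<Sum>j\<in>{0..<n}. (\<bar>x i\<bar> - \<bar>x j\<bar>)\<^sup>2)"
    by (intro sum_nonneg) auto
  also have "\<dots> = 2 * real n * (\<Sum>i\<in>{0..<n}. (x i)\<^sup>2) - 2 * (\<Sum>i\<in>{0..<n}. \<bar>x i\<bar>)\<^sup>2"
    by (simp add: power2_diff sum.distrib sum_subtractf sum_distrib_left sum_distrib_right
        power2_eq_square algebra_simps)
  finally show ?thesis by simp
qed

lemma scalar_prod_self_eq_sum:
  "u \<in> carrier_vec n \<Longrightarrow> u \<bullet> u = (\<Sum>i\<in>{0..<n}. (u $ i)\<^sup>2 :: real)"
  by (simp add: scalar_prod_def power2_eq_square)

lemma entry_sq_le_scalar_prod_self: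
  "u \<in> carrier_vec n \<Longrightarrow> j < n \<Longrightarrow> (u $ j)\<^sup>2 \<le> u \<bullet> (u :: real vec)"
  by (simp add: scalar_prod_self_eq_sum member_le_sum[of j "{0..<n}" "\<lambda>i. (u $ i)\<^sup>2"])

locale diag_dominant_mat =
  fixes A :: "real mat" and n :: nat and m :: real
  assumes carrier: "A \<in> carrier_mat n n"
    and symmetric: "transpose_mat A = A"
    and off_diag_lower: "\<And>i j. i < n \<Longrightarrow> j < n \<Longrightarrow> i \<noteq> j \<Longrightarrow> m \<le> A $$ (i, j)"
    and row_dominant: "\<And>i. i < n \<Longrightarrow> (\<Sum>j\<in>{0..<n} - {i}. A $$ (i, j)) \<le> A $$ (i, i)"
    and lower_nonneg: "0 \<le> m"
begin

lemma entry_sym: "i < n \<Longrightarrow> j < n \<Longrightarrow> A $$ (j, i) = A $$ (i, j)"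
  using arg_cong[OF symmetric, of "\<lambda>B. B $$ (i, j)"] carrier by simp

lemma diag_nonneg: "i < n \<Longrightarrow> 0 \<le> A $$ (i, i)"
  using row_dominant[of i] off_diag_lower[of i] lower_nonneg
    sum_nonneg[of "{0..<n} - {i}" "\<lambda>j. A $$ (i, j)"] by force

lemma off_diag_sum_swap:
  "(\<Sum>i\<in>{0..<n}. \<Sum>j\<in>{0..<n} - {i}. A $$ (i, j) * f i)
    = (\<Sum>i\<in>{0..<n}. \<Sum>j\<in>{0..<n} - {i}. A $$ (i, j) * f j)"
proof -
  have diff: "{0..<n} - {i} = {j. j \<in> {0..<n} \<and> i \<noteq> j}" for i
    by auto
  have "(\<Sum>i\<in>{0..<n}. \<Sum>j\<in>{0..<n} - {i}. A $$ (i, j) * f i)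
      = (\<Sum>j\<in>{0..<n}. \<Sum>i\<in>{0..<n} - {j}. A $$ (i, j) * f i)"
    unfolding diff by (subst sum.swap_restrict) (auto intro!: sum.cong)
  also have "\<dots> = (\<Sum>i\<in>{0..<n}. \<Sum>j\<in>{0..<n} - {i}. A $$ (i, j) * f j)"
    by (intro sum.cong refl) (simp add: entry_sym)
  finally show ?thesis .
qed

lemma off_diag_form_le_quadratic_form:
  assumes u: "u \<in> carrier_vec n"
  shows "(\<Sum>i\<in>{0..<n}. \<Sum>j\<in>{0..<n} - {i}. A $$ (i, j) * ((u $ i)\<^sup>2 + u $ i * u $ j))
    \<le> u \<bullet> (A *\<^sub>v u)"
proof -
  let ?I = "{0..<n}"
  have "(\<Sum>i\<in>?I. \<Sum>j\<in>?I - {i}. A $$ (i, j) * ((u $ i)\<^sup>2 + u $ i * u $ j))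
      \<le> (\<Sum>i\<in>?I. u $ i * (\<Sum>j\<in>?I. A $$ (i, j) * u $ j))"
  proof (rule sum_mono)
    fix i assume i: "i \<in> ?I"
    have "(\<Sum>j\<in>?I - {i}. A $$ (i, j)) * (u $ i)\<^sup>2 \<le> A $$ (i, i) * (u $ i)\<^sup>2"
      using row_dominant i by (intro mult_right_mono) auto
    then show "(\<Sum>j\<in>?I - {i}. A $$ (i, j) * ((u $ i)\<^sup>2 + u $ i * u $ j))
        \<le> u $ i * (\<Sum>j\<in>?I. A $$ (i, j) * u $ j)"
      using i by (simp add: sum.remove[of ?I i] sum.distrib sum_distrib_left sum_distrib_right
          algebra_simps power2_eq_square)
  qed
  also have "\<dots> = u \<bullet> (A *\<^sub>v u)"
    using u carrier by (simp add: scalar_prod_def)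
  finally show ?thesis .
qed

lemma off_diag_row_abs_le:
  assumes upper: "\<And>i j. i < n \<Longrightarrow> j < n \<Longrightarrow> i \<noteq> j \<Longrightarrow> A $$ (i, j) \<le> M"
    and M: "0 \<le> M" and i: "i < n"
  shows "\<bar>\<Sum>j\<in>{0..<n} - {i}. A $$ (i, j) * x j\<bar> \<le> M * (\<Sum>j\<in>{0..<n}. \<bar>x j\<bar>)"
proof -
  have "\<bar>\<Sum>j\<in>{0..<n} - {i}. A $$ (i, j) * x j\<bar> \<le> (\<Sum>j\<in>{0..<n} - {i}. M * \<bar>x j\<bar>)"
  proof (rule order_trans[OF sum_abs sum_mono])
    fix j assume "j \<in> {0..<n} - {i}"
    then have "0 \<le> A $$ (i, j)" "A $$ (i, j) \<le> M"
      using off_diag_lower[of i j] upper[of i j] lower_nonneg i by auto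
    then show "\<bar>A $$ (i, j) * x j\<bar> \<le> M * \<bar>x j\<bar>"
      by (simp add: abs_mult mult_right_mono)
  qed
  also have "\<dots> \<le> M * (\<Sum>j\<in>{0..<n}. \<bar>x j\<bar>)"
    unfolding sum_distrib_left[symmetric]
    using M by (intro mult_left_mono sum_mono2) auto
  finally show ?thesis .
qed

lemma quadratic_form_lower_bound:
  assumes u: "u \<in> carrier_vec n"
  shows "m * (real n - 2) * (u \<bullet> u) \<le> u \<bullet> (A *\<^sub>v u)"
proof -
  let ?I = "{0..<n}"
  let ?T = "\<Sum>i\<in>?I. \<Sum>j\<in>?I - {i}. A $$ (i, j) * ((u $ i)\<^sup>2 + u $ i * u $ j)"
  have "2 * (real n - 2) * (u \<bullet> u) \<le> (\<Sum>i\<in>?I. \<Sum>j\<in>?I - {i}. (u $ i + u $ j)\<^sup>2)"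
    using sum_off_diagonal_squares[of "\<lambda>i. u $ i" n] scalar_prod_self_eq_sum[OF u] by simp
  then have "m * (2 * (real n - 2) * (u \<bullet> u)) \<le> m * (\<Sum>i\<in>?I. \<Sum>j\<in>?I - {i}. (u $ i + u $ j)\<^sup>2)"
    using lower_nonneg by (rule mult_left_mono)
  also have "\<dots> \<le> (\<Sum>i\<in>?I. \<Sum>j\<in>?I - {i}. A $$ (i, j) * (u $ i + u $ j)\<^sup>2)"
    unfolding sum_distrib_left using off_diag_lower by (intro sum_mono mult_right_mono) auto
  also have "\<dots> = 2 * ?T"
    using off_diag_sum_swap[of "\<lambda>i. (u $ i)\<^sup>2"]
    by (simp add: power2_sum sum.distrib sum_distrib_left algebra_simps)
  finally have "m * (real n - 2) * (u \<bullet> u) \<le> ?T"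
    by (simp add: algebra_simps)
  with off_diag_form_le_quadratic_form[OF u] show ?thesis
    by linarith
qed

lemma br_block_diag_dominant:
  assumes "r \<le> n"
  shows "diag_dominant_mat (br_block A r) (n - r) m"
proof
  let ?B = "br_block A r"
  have entry: "?B $$ (i, j) = A $$ (i + r, j + r)" if "i < n - r" "j < n - r" for i j
    using that carrier by (simp add: br_block_def)
  show "?B \<in> carrier_mat (n - r) (n - r)"
    using carrier by (simp add: br_block_def)
  show "transpose_mat ?B = ?B"
    using carrier entry_sym by (intro eq_matI) (auto simp: br_block_def)
  show "m \<le> ?B $$ (i, j)" if "i < n - r" "j < n - r" "i \<noteq> j" for i j
    using that entry off_diag_lower by simp
  show "0 \<le> m"
    by (rule lower_nonneg)
  show "(\<Sum>j\<in>{0..<n - r} - {i}. ?B $$ (i, j)) \<le> ?B $$ (i, i)" if i: "i < n - r" for i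
  proof -
    have "(\<Sum>j\<in>{0..<n - r} - {i}. ?B $$ (i, j))
        = (\<Sum>j\<in>(\<lambda>j. j + r) ` ({0..<n - r} - {i}). A $$ (i + r, j))"
      using i entry by (simp add: sum.reindex)
    also have "\<dots> \<le> (\<Sum>j\<in>{0..<n} - {i + r}. A $$ (i + r, j))"
    proof (rule sum_mono2)
      show "(\<lambda>j. j + r) ` ({0..<n - r} - {i}) \<subseteq> {0..<n} - {i + r}"
        using i by auto
      show "0 \<le> A $$ (i + r, j)"
        if "j \<in> {0..<n} - {i + r} - (\<lambda>j. j + r) ` ({0..<n - r} - {i})" for j
        using that i off_diag_lower[of "i + r" j] lower_nonneg by (force simp: less_diff_conv)
    qed simp
    also have "\<dots> \<le> ?B $$ (i, i)"
      using row_dominant[of "i + r"] i entry by simp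
    finally show ?thesis .
  qed
qed

end

lemma mat_inv_inverse:
  assumes A: "A \<in> carrier_mat n n" and "det A \<noteq> 0"
  shows "mat_inv A \<in> carrier_mat n n" and "A * mat_inv A = 1\<^sub>m n" and "mat_inv A * A = 1\<^sub>m n"
proof -
  have "A \<in> Units (ring_mat TYPE(real) n undefined)"
    using det_non_zero_imp_unit[OF A] assms(2) .
  then obtain B where B: "mat_inverse A = Some B"
    using mat_inverse(1)[OF A, of undefined] by (cases "mat_inverse A") auto
  then show "mat_inv A \<in> carrier_mat n n" and "A * mat_inv A = 1\<^sub>m n" and "mat_inv A * A = 1\<^sub>m n"
    using mat_inverse(2)[OF A B] by (simp_all add: mat_inv_def)
qed

locale coercive_dominant_mat = diag_dominant_mat +
  assumes three_le_dim: "3 \<le> n" and lower_pos: "0 < m"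
begin

lemma coercivity_pos: "0 < m * (real n - 2)"
  using three_le_dim lower_pos by simp

lemma mult_vec_eq_zero_imp:
  assumes u: "u \<in> carrier_vec n" and "A *\<^sub>v u = 0\<^sub>v n"
  shows "u = 0\<^sub>v n"
proof -
  have "m * (real n - 2) * (u \<bullet> u) \<le> 0"
    using quadratic_form_lower_bound[OF u] assms by simp
  then have "u \<bullet> u \<le> 0"
    using coercivity_pos by (metis mult_le_cancel_left_pos mult_zero_right)
  then have "(u $ j)\<^sup>2 \<le> 0" if "j < n" for j
    using entry_sq_le_scalar_prod_self[OF u that] by linarith
  then show ?thesis
    using u by (intro eq_vecI) auto
qed

lemma det_nonzero: "det A \<noteq> 0"
  using det_0_iff_vec_prod_zero[OF carrier] mult_vec_eq_zero_imp by blast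

lemma unit_solution_entry_bound:
  assumes u: "u \<in> carrier_vec n" and sol: "A *\<^sub>v u = unit_vec n k" and k: "k < n" and j: "j < n"
  shows "\<bar>u $ j\<bar> \<le> 1 / (m * (real n - 2))"
proof -
  define \<kappa> where "\<kappa> = m * (real n - 2)"
  have \<kappa>: "0 < \<kappa>"
    using coercivity_pos by (simp add: \<kappa>_def)
  have quad: "\<kappa> * (u \<bullet> u) \<le> u $ k"
    using quadratic_form_lower_bound[OF u] sol u k by (simp add: \<kappa>_def)
  have "\<kappa> * (u $ k)\<^sup>2 \<le> u $ k"
    using mult_left_mono[OF entry_sq_le_scalar_prod_self[OF u k], of \<kappa>] quad \<kappa> by linarith
  have "u $ k \<le> 1 / \<kappa>"
  proof (cases "u $ k > 0")
    case True
    with \<open>\<kappa> * (u $ k)\<^sup>2 \<le> u $ k\<close> have "\<kappa> * u $ k * u $ k \<le> 1 * u $ k"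
      by (simp add: power2_eq_square mult.assoc)
    then have "\<kappa> * u $ k \<le> 1"
      using True by (rule mult_right_le_imp_le)
    then show ?thesis
      using \<kappa> by (simp add: pos_le_divide_eq mult.commute)
  next
    case False
    moreover have "0 < 1 / \<kappa>"
      using \<kappa> by simp
    ultimately show ?thesis
      by linarith
  qed
  then have "\<kappa> * (u \<bullet> u) \<le> 1 / \<kappa>"
    using quad by linarith
  then have "u \<bullet> u \<le> (1 / \<kappa>)\<^sup>2"
    using \<kappa> by (simp add: field_simps power2_eq_square)
  then have "(u $ j)\<^sup>2 \<le> (1 / \<kappa>)\<^sup>2"
    using entry_sq_le_scalar_prod_self[OF u j] by linarith
  then show ?thesis
    using \<kappa> abs_le_square_iff[of "u $ j" "1 / \<kappa>"] by (simp add: \<kappa>_def)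
qed

lemma solution_abs_sum_bound:
  assumes u: "u \<in> carrier_vec n" and sol: "A *\<^sub>v u = y" and y: "\<And>i. i < n \<Longrightarrow> \<bar>y $ i\<bar> \<le> M"
  shows "m * (real n - 2) * (\<Sum>i\<in>{0..<n}. \<bar>u $ i\<bar>) \<le> real n * M"
proof -
  define \<kappa> where "\<kappa> = m * (real n - 2)"
  define t where "t = (\<Sum>i\<in>{0..<n}. \<bar>u $ i\<bar>)"
  have \<kappa>: "0 < \<kappa>"
    using coercivity_pos by (simp add: \<kappa>_def)
  have M: "0 \<le> M"
    using y[of 0] three_le_dim by linarith
  have "u \<bullet> y = (\<Sum>i\<in>{0..<n}. u $ i * y $ i)"
    using u carrier by (simp add: scalar_prod_def flip: sol)
  also have "\<dots> \<le> (\<Sum>i\<in>{0..<n}. \<bar>u $ i\<bar> * M)"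
  proof (rule sum_mono)
    fix i assume "i \<in> {0..<n}"
    then have "\<bar>u $ i\<bar> * \<bar>y $ i\<bar> \<le> \<bar>u $ i\<bar> * M"
      using y by (simp add: mult_left_mono)
    then show "u $ i * y $ i \<le> \<bar>u $ i\<bar> * M"
      by (metis abs_ge_self abs_mult order_trans)
  qed
  also have "\<dots> = M * t"
    by (simp add: t_def sum_distrib_left mult.commute)
  finally have quad: "\<kappa> * (u \<bullet> u) \<le> M * t"
    using quadratic_form_lower_bound[OF u] sol by (simp add: \<kappa>_def)
  have "t\<^sup>2 \<le> real n * (u \<bullet> u)"
    using sum_abs_squared_le[of "\<lambda>i. u $ i" n] scalar_prod_self_eq_sum[OF u] by (simp add: t_def)
  then have "\<kappa> * t\<^sup>2 \<le> real n * (\<kappa> * (u \<bullet> u))"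
    using \<kappa> by (simp add: mult_left_mono mult.left_commute)
  also have "\<dots> \<le> real n * (M * t)"
    using quad by (simp add: mult_left_mono)
  finally have "(\<kappa> * t) * t \<le> (real n * M) * t"
    by (simp add: power2_eq_square algebra_simps)
  moreover have "0 \<le> t"
    by (simp add: t_def sum_nonneg)
  ultimately have "\<kappa> * t \<le> real n * M"
    using M by (cases "t = 0") (auto dest: mult_right_le_imp_le)
  then show ?thesis
    by (simp add: \<kappa>_def t_def)
qed

lemma solution_entry_bound:
  assumes u: "u \<in> carrier_vec n" and sol: "A *\<^sub>v u = y" and y: "\<And>i. i < n \<Longrightarrow> \<bar>y $ i\<bar> \<le> M"
    and upper: "\<And>i j. i < n \<Longrightarrow> j < n \<Longrightarrow> i \<noteq> j \<Longrightarrow> A $$ (i, j) \<le> M"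
    and i: "i < n"
  shows "A $$ (i, i) * \<bar>u $ i\<bar> \<le> M + 3 * M\<^sup>2 / m"
proof -
  let ?I = "{0..<n}"
  define t where "t = (\<Sum>j\<in>?I. \<bar>u $ j\<bar>)"
  have M: "0 \<le> M"
    using y[OF i] by linarith
  have "y $ i = (\<Sum>j\<in>?I. A $$ (i, j) * u $ j)"
    using u carrier i by (simp add: scalar_prod_def flip: sol)
  then have diag: "A $$ (i, i) * u $ i = y $ i - (\<Sum>j\<in>?I - {i}. A $$ (i, j) * u $ j)"
    using i by (simp add: sum.remove[of ?I i])
  have "\<bar>\<Sum>j\<in>?I - {i}. A $$ (i, j) * u $ j\<bar> \<le> M * t"
    unfolding t_def using upper M i by (rule off_diag_row_abs_le)
  also have "\<dots> \<le> M * (3 * M / m)"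
  proof (intro mult_left_mono M)
    have "m * (real n - 2) * t \<le> real n * M"
      using solution_abs_sum_bound[OF u sol y] by (simp add: t_def)
    also have "\<dots> \<le> 3 * (real n - 2) * M"
      using three_le_dim M by (intro mult_right_mono) auto
    finally have "(m * t) * (real n - 2) \<le> (3 * M) * (real n - 2)"
      by (simp add: algebra_simps)
    then have "m * t \<le> 3 * M"
      by (rule mult_right_le_imp_le) (use three_le_dim in simp)
    then show "t \<le> 3 * M / m"
      using lower_pos by (simp add: pos_le_divide_eq mult.commute)
  qed
  also have "\<dots> = 3 * M\<^sup>2 / m"
    by (simp add: power2_eq_square)
  finally have "\<bar>A $$ (i, i) * u $ i\<bar> \<le> M + 3 * M\<^sup>2 / m"
    using diag y[OF i] abs_triangle_ineq4[of "y $ i"] by linarith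
  then show ?thesis
    using diag_nonneg[OF i] by (simp add: abs_mult)
qed

lemma mat_inv_carrier: "mat_inv A \<in> carrier_mat n n"
  and mult_mat_inv: "A * mat_inv A = 1\<^sub>m n"
  and mat_inv_mult: "mat_inv A * A = 1\<^sub>m n"
  using mat_inv_inverse[OF carrier det_nonzero] by auto

lemma mat_inv_entry_bound:
  assumes "i < n" and "j < n"
  shows "\<bar>mat_inv A $$ (i, j)\<bar> \<le> 1 / (m * (real n - 2))"
proof -
  have "A *\<^sub>v col (mat_inv A) j = unit_vec n j"
    using assms mult_mat_inv carrier mat_inv_carrier by (simp flip: col_mult2)
  then show ?thesis
    using unit_solution_entry_bound[of "col (mat_inv A) j" j i] assms mat_inv_carrier by simp
qed

lemma mat_inv_mult_entry_bound:
  assumes upper: "\<And>i j. i < n \<Longrightarrow> j < n \<Longrightarrow> i \<noteq> j \<Longrightarrow> A $$ (i, j) \<le> M"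
    and diag: "\<And>i. i < n \<Longrightarrow> D \<le> A $$ (i, i)" and D: "0 < D"
    and B: "B \<in> carrier_mat n p" and B_bound: "\<And>i j. i < n \<Longrightarrow> j < p \<Longrightarrow> \<bar>B $$ (i, j)\<bar> \<le> M"
    and i: "i < n" and j: "j < p"
  shows "\<bar>(mat_inv A * B) $$ (i, j)\<bar> \<le> (M + 3 * M\<^sup>2 / m) / D"
proof -
  let ?u = "col (mat_inv A * B) j"
  have u: "?u \<in> carrier_vec n"
    using mat_inv_carrier B j by simp
  have "?u = mat_inv A *\<^sub>v col B j"
    using mat_inv_carrier B j by (rule col_mult2)
  then have "A *\<^sub>v ?u = (A * mat_inv A) *\<^sub>v col B j"
    using carrier mat_inv_carrier B assoc_mult_mat_vec[of A n n "mat_inv A" n "col B j"] by auto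
  also have "\<dots> = col B j"
    using mult_mat_inv B by (auto intro!: one_mult_mat_vec carrier_vecI)
  finally have "A $$ (i, i) * \<bar>?u $ i\<bar> \<le> M + 3 * M\<^sup>2 / m"
    using solution_entry_bound[OF u _ _ upper i] B_bound B j by simp
  moreover have "D * \<bar>?u $ i\<bar> \<le> A $$ (i, i) * \<bar>?u $ i\<bar>"
    using diag[OF i] by (simp add: mult_right_mono)
  ultimately show ?thesis
    using D i j mat_inv_carrier B by (simp add: pos_le_divide_eq mult.commute)
qed

lemma br_block_coercive:
  assumes "r + 3 \<le> n"
  shows "coercive_dominant_mat (br_block A r) (n - r) m"
  using assms br_block_diag_dominant[of r] lower_pos
  by (simp add: coercive_dominant_mat_def coercive_dominant_mat_axioms_def)

end

lemma class_L_diag_dominant: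
  assumes "V \<in> class_L n m M" and "transpose_mat V = V" and "0 \<le> m"
  shows "diag_dominant_mat V n m"
  using assms by unfold_locales (auto simp: class_L_def)

lemma class_L_coercive:
  assumes "V \<in> class_L n m M" and "transpose_mat V = V" and "0 < m" and "3 \<le> n"
  shows "coercive_dominant_mat V n m"
  using assms class_L_diag_dominant[of V n m M]
  by (simp add: coercive_dominant_mat_def coercive_dominant_mat_axioms_def)

lemma class_L_diag_lower:
  assumes "V \<in> class_L n m M" and "i < n"
  shows "(real n - 1) * m \<le> V $$ (i, i)"
proof -
  have "real (card ({0..<n} - {i})) * m \<le> (\<Sum>j\<in>{0..<n} - {i}. V $$ (i, j))"
    using assms by (intro sum_bounded_below) (auto simp: class_L_def)
  then show ?thesis
    using assms by (simp add: class_L_def)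
qed

lemma split_block_four_block_mat:
  assumes "A \<in> carrier_mat nr1 nc1" "B \<in> carrier_mat nr1 nc2"
    and "C \<in> carrier_mat nr2 nc1" "D \<in> carrier_mat nr2 nc2"
  shows "split_block (four_block_mat A B C D) nr1 nc1 = (A, B, C, D)"
  using assms by (auto simp: split_block_def Let_def intro!: eq_matI)

lemma add_eq_imp_diff_eq_uminus_mat:
  fixes A B C :: "'a :: ab_group_add mat"
  assumes "A \<in> carrier_mat nr nc" "B \<in> carrier_mat nr nc" and "A + B = C"
  shows "B - C = - A"
  using assms by (auto intro!: eq_matI)

lemma lower_blocks_of_product:
  fixes A1 B1 C1 D1 :: "'a :: comm_ring_1 mat"
  assumes c1: "A1 \<in> carrier_mat r r" "B1 \<in> carrier_mat r k" "C1 \<in> carrier_mat k r" "D1 \<in> carrier_mat k k"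
    and c2: "A2 \<in> carrier_mat r r" "B2 \<in> carrier_mat r k" "C2 \<in> carrier_mat k r" "D2 \<in> carrier_mat k k"
    and one: "four_block_mat A1 B1 C1 D1 * four_block_mat A2 B2 C2 D2 = 1\<^sub>m (r + k)"
  shows "C1 * A2 + D1 * C2 = 0\<^sub>m k r" and "C1 * B2 + D1 * D2 = 1\<^sub>m k"
proof -
  have "four_block_mat (A1 * A2 + B1 * C2) (A1 * B2 + B1 * D2) (C1 * A2 + D1 * C2) (C1 * B2 + D1 * D2)
      = four_block_mat (1\<^sub>m r) (0\<^sub>m r k) (0\<^sub>m k r) (1\<^sub>m k)"
    using one mult_four_block_mat[OF c1 c2] by simp
  then have "split_block (four_block_mat (A1 * A2 + B1 * C2) (A1 * B2 + B1 * D2)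
      (C1 * A2 + D1 * C2) (C1 * B2 + D1 * D2)) r r = (1\<^sub>m r, 0\<^sub>m r k, 0\<^sub>m k r, 1\<^sub>m k)"
    using split_block_four_block_mat[of "1\<^sub>m r" r r "0\<^sub>m r k" k "0\<^sub>m k r" k "1\<^sub>m k"] by simp
  moreover have "split_block (four_block_mat (A1 * A2 + B1 * C2) (A1 * B2 + B1 * D2)
      (C1 * A2 + D1 * C2) (C1 * B2 + D1 * D2)) r r
    = (A1 * A2 + B1 * C2, A1 * B2 + B1 * D2, C1 * A2 + D1 * C2, C1 * B2 + D1 * D2)"
    using c1 c2 by (intro split_block_four_block_mat) auto
  ultimately show "C1 * A2 + D1 * C2 = 0\<^sub>m k r" and "C1 * B2 + D1 * D2 = 1\<^sub>m k"
    by simp_all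
qed

lemma inverse_lower_right_block:
  fixes V P Q :: "'a :: comm_ring_1 mat"
  assumes V: "V \<in> carrier_mat (r + k) (r + k)" and P: "P \<in> carrier_mat (r + k) (r + k)"
    and VP: "V * P = 1\<^sub>m (r + k)" and PV: "P * V = 1\<^sub>m (r + k)"
    and sV: "split_block V r r = (V11, V12, V21, V22)"
    and sP: "split_block P r r = (P11, P12, P21, P22)"
    and Q: "Q \<in> carrier_mat k k" and V22Q: "V22 * Q = 1\<^sub>m k" and QV22: "Q * V22 = 1\<^sub>m k"
  shows "P22 - Q = Q * V21 * P11 * (V12 * Q)"
proof -
  note cV = split_block[OF sV, of k k] and cP = split_block[OF sP, of k k]
  have c: "V11 \<in> carrier_mat r r" "V12 \<in> carrier_mat r k" "V21 \<in> carrier_mat k r" "V22 \<in> carrier_mat k k"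
    "P11 \<in> carrier_mat r r" "P12 \<in> carrier_mat r k" "P21 \<in> carrier_mat k r" "P22 \<in> carrier_mat k k"
    using cV cP V P by auto
  have "V21 * P11 + V22 * P21 = 0\<^sub>m k r"
    using lower_blocks_of_product(1)[OF c(1-4) c(5-8)] VP cV cP V P by simp
  then have "Q * (V21 * P11 + V22 * P21) = 0\<^sub>m k r"
    using Q by simp
  moreover have "Q * (V21 * P11 + V22 * P21) = Q * V21 * P11 + (Q * V22) * P21"
    using Q c by (simp add: mult_add_distrib_mat[of Q k k _ r] assoc_mult_mat[of Q k k _ k _ r])
  ultimately have "Q * V21 * P11 + P21 = 0\<^sub>m k r"
    using QV22 c by simp
  then have "P21 - 0\<^sub>m k r = - (Q * V21 * P11)"
    using add_eq_imp_diff_eq_uminus_mat[of "Q * V21 * P11" k r P21] Q c by simp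
  moreover have "P21 - 0\<^sub>m k r = P21"
    using c by (auto intro!: eq_matI)
  ultimately have P21_eq: "P21 = - (Q * V21 * P11)"
    by simp
  have "P21 * V12 + P22 * V22 = 1\<^sub>m k"
    using lower_blocks_of_product(2)[OF c(5-8) c(1-4)] PV cV cP V P by simp
  then have "(P21 * V12 + P22 * V22) * Q = Q"
    using Q by simp
  moreover have "(P21 * V12 + P22 * V22) * Q = P21 * V12 * Q + P22 * (V22 * Q)"
    using Q c by (simp add: add_mult_distrib_mat[of _ k k] assoc_mult_mat[of P22 k k V22 k Q k])
  ultimately have "P21 * V12 * Q + P22 = Q"
    using V22Q c by simp
  then have "P22 - Q = - (P21 * V12 * Q)"
    using add_eq_imp_diff_eq_uminus_mat[of "P21 * V12 * Q" k k P22] Q c by simp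
  also have "\<dots> = Q * V21 * P11 * V12 * Q"
    using Q c by (simp add: P21_eq)
  also have "\<dots> = Q * V21 * P11 * (V12 * Q)"
    by (rule assoc_mult_mat) (use Q c in auto)
  finally show ?thesis .
qed

lemma transpose_inverse_of_symmetric:
  fixes A B :: "'a :: comm_ring_1 mat"
  assumes A: "A \<in> carrier_mat n n" and B: "B \<in> carrier_mat n n"
    and sym: "transpose_mat A = A" and AB: "A * B = 1\<^sub>m n" and BA: "B * A = 1\<^sub>m n"
  shows "transpose_mat B = B"
proof -
  have "transpose_mat B * A = transpose_mat (A * B)"
    using transpose_mult[OF A B] sym by simp
  then have BtA: "transpose_mat B * A = 1\<^sub>m n"
    using AB by simp
  have "transpose_mat B = (transpose_mat B * A) * B"
    using A B by (simp add: assoc_mult_mat[of _ n n A n B n] AB)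
  then show ?thesis
    using B BtA by simp
qed

lemma symmetric_inverse_lower_right_block:
  fixes V P Q :: "real mat"
  assumes V: "V \<in> carrier_mat (r + k) (r + k)" and sym: "transpose_mat V = V"
    and P: "P \<in> carrier_mat (r + k) (r + k)" and VP: "V * P = 1\<^sub>m (r + k)" and PV: "P * V = 1\<^sub>m (r + k)"
    and Q: "Q \<in> carrier_mat k k" and V22Q: "br_block V r * Q = 1\<^sub>m k" and QV22: "Q * br_block V r = 1\<^sub>m k"
  defines "V21 \<equiv> mat k r (\<lambda>(i, j). V $$ (i + r, j))" and "P11 \<equiv> mat r r (\<lambda>ij. P $$ ij)"
  shows "br_block P r - Q = Q * V21 * P11 * transpose_mat (Q * V21)"
proof -
  have V_sym: "V $$ (j, i) = V $$ (i, j)" if "i < r + k" "j < r + k" for i j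
    using arg_cong[OF sym, of "\<lambda>A. A $$ (i, j)"] V that by simp
  obtain V11 V12 V21' V22 where sV: "split_block V r r = (V11, V12, V21', V22)"
    by (cases "split_block V r r") auto
  obtain P11' P12 P21 P22 where sP: "split_block P r r = (P11', P12, P21, P22)"
    by (cases "split_block P r r") auto
  have blocks: "V21' = V21" "V12 = mat r k (\<lambda>(i, j). V $$ (i, j + r))" "V22 = br_block V r"
    "P11' = P11" "P22 = br_block P r"
    using sV sP V P by (auto simp: split_block_def br_block_def Let_def V21_def P11_def)
  have "br_block P r - Q = Q * V21 * P11 * (V12 * Q)"
    using inverse_lower_right_block[OF V P VP PV sV sP Q] V22Q QV22 by (simp add: blocks)
  moreover have "transpose_mat Q = Q"
  proof (rule transpose_inverse_of_symmetric[OF _ Q _ V22Q QV22])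
    show "br_block V r \<in> carrier_mat k k"
      using V by (simp add: br_block_def)
    show "transpose_mat (br_block V r) = br_block V r"
      using V V_sym by (auto simp: br_block_def intro!: eq_matI)
  qed
  moreover have "transpose_mat V21 = V12"
    using V V_sym by (auto simp: blocks V21_def intro!: eq_matI)
  moreover have "V21 \<in> carrier_mat k r"
    by (simp add: V21_def)
  ultimately show ?thesis
    using transpose_mult[OF Q] by simp
qed

lemma br_block_minus_inv_diag:
  assumes "A \<in> carrier_mat n n" "P \<in> carrier_mat n n" "Q \<in> carrier_mat (n - r) (n - r)"
  shows "br_block (P - inv_diag A) r - (Q - inv_diag (br_block A r)) = br_block P r - Q"
  using assms by (intro eq_matI) (auto simp: br_block_def inv_diag_def)

lemma abs_mult_entry_le:
  fixes A B :: "real mat"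
  assumes A: "A \<in> carrier_mat nr k" and B: "B \<in> carrier_mat k nc" and i: "i < nr" and j: "j < nc"
    and A_bound: "\<And>l. l < k \<Longrightarrow> \<bar>A $$ (i, l)\<bar> \<le> a"
    and B_bound: "\<And>l. l < k \<Longrightarrow> \<bar>B $$ (l, j)\<bar> \<le> b"
  shows "\<bar>(A * B) $$ (i, j)\<bar> \<le> real k * a * b"
proof -
  have "\<bar>(A * B) $$ (i, j)\<bar> = \<bar>\<Sum>l\<in>{0..<k}. A $$ (i, l) * B $$ (l, j)\<bar>"
    using A B i j by (simp add: scalar_prod_def)
  also have "\<dots> \<le> (\<Sum>l\<in>{0..<k}. a * b)"
    using A_bound B_bound
    by (intro order_trans[OF sum_abs sum_mono])
      (auto simp: abs_mult intro: mult_mono' order_trans[OF abs_ge_zero])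
  finally show ?thesis
    by simp
qed

lemma max_norm_le:
  assumes "0 < dim_row X" "0 < dim_col X"
    and "\<And>i j. i < dim_row X \<Longrightarrow> j < dim_col X \<Longrightarrow> \<bar>X $$ (i, j)\<bar> \<le> B"
  shows "max_norm X \<le> B"
proof -
  have "{\<bar>X $$ (i, j)\<bar> | i j. i < dim_row X \<and> j < dim_col X}
      = (\<lambda>(i, j). \<bar>X $$ (i, j)\<bar>) ` ({..<dim_row X} \<times> {..<dim_col X})"
    by auto
  then show ?thesis
    using assms unfolding max_norm_def by (subst Max_le_iff) auto
qed

lemma class_L_bound_le_b6_n3_c5:
  fixes b c :: real and n :: nat
  assumes c: "0 < c" "c \<le> b" and n: "3 \<le> n"
  defines "m \<equiv> 1 / b" and "M \<equiv> 1 / c"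
  shows "((M + 3 * M\<^sup>2 / m) / ((real n - 1) * m))\<^sup>2 * (1 / (m * (real n - 2)))
    \<le> 112 * b ^ 6 / (real n ^ 3 * c ^ 5)"
proof -
  define k where "k = b / c"
  have k: "1 \<le> k"
    using c by (simp add: k_def)
  have b: "0 < b"
    using c by simp
  have "(M + 3 * M\<^sup>2 / m) / ((real n - 1) * m) = (k + 3 * k\<^sup>2) / (real n - 1)"
    using c b n by (simp add: m_def M_def k_def field_simps power2_eq_square)
  also have "\<dots> \<le> 4 * k\<^sup>2 / (real n - 1)"
    using k n by (intro divide_right_mono) (auto simp: power2_eq_square)
  finally have beta: "((M + 3 * M\<^sup>2 / m) / ((real n - 1) * m))\<^sup>2 \<le> (4 * k\<^sup>2 / (real n - 1))\<^sup>2"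
    using c b n by (intro power_mono) (auto simp: m_def M_def)
  have cubic: "real n ^ 3 \<le> 7 * ((real n - 1)\<^sup>2 * (real n - 2))"
  proof -
    define t where "t = real n - 3"
    have "0 \<le> t"
      using n by (simp add: t_def)
    then have "0 \<le> 1 + 29 * t + 26 * t\<^sup>2 + 6 * t ^ 3"
      by simp
    also have "\<dots> = 7 * ((real n - 1)\<^sup>2 * (real n - 2)) - real n ^ 3"
      by (simp add: t_def power2_eq_square power3_eq_cube algebra_simps)
    finally show ?thesis
      by simp
  qed
  have "((M + 3 * M\<^sup>2 / m) / ((real n - 1) * m))\<^sup>2 * (1 / (m * (real n - 2)))
      \<le> (4 * k\<^sup>2 / (real n - 1))\<^sup>2 * (1 / (m * (real n - 2)))"
    using beta n b by (intro mult_right_mono) (auto simp: m_def)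
  also have "\<dots> = 16 * k ^ 4 * b / ((real n - 1)\<^sup>2 * (real n - 2))"
    by (simp add: m_def power2_eq_square power4_eq_xxxx)
  also have "\<dots> \<le> 112 * k ^ 5 * b / real n ^ 3"
  proof -
    have "16 * k ^ 4 * b * real n ^ 3 \<le> 16 * k ^ 4 * b * (7 * ((real n - 1)\<^sup>2 * (real n - 2)))"
      using cubic b k by (intro mult_left_mono) auto
    also have "\<dots> = (112 * k ^ 4 * b) * ((real n - 1)\<^sup>2 * (real n - 2))"
      by simp
    also have "\<dots> \<le> (112 * k ^ 5 * b) * ((real n - 1)\<^sup>2 * (real n - 2))"
      using k b n by (intro mult_right_mono) (auto simp: power_increasing)
    finally show ?thesis
      using n by (simp add: divide_simps)
  qed
  also have "\<dots> = 112 * b ^ 6 / (real n ^ 3 * c ^ 5)"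
    using c by (simp add: k_def field_simps power_divide) (simp add: numeral_eq_Suc)
  finally show ?thesis .
qed

lemma class_L_br_block_inverse_bound:
  assumes VL: "V \<in> class_L n m M" and sym: "transpose_mat V = V" and m: "0 < m" and n: "r + 3 \<le> n"
  shows "max_norm (br_block (mat_inv V - inv_diag V) r - (mat_inv (br_block V r) - inv_diag (br_block V r)))
    \<le> real r ^ 2 * (((M + 3 * M\<^sup>2 / m) / ((real n - 1) * m))\<^sup>2 * (1 / (m * (real n - 2))))"
proof -
  define k where "k = n - r"
  define \<beta> where "\<beta> = (M + 3 * M\<^sup>2 / m) / ((real n - 1) * m)"
  define \<gamma> where "\<gamma> = 1 / (m * (real n - 2))"
  have nk: "n = r + k" and k: "3 \<le> k"
    using n by (auto simp: k_def)
  interpret V: coercive_dominant_mat V n m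
    using VL sym m n by (intro class_L_coercive) auto
  interpret V22: coercive_dominant_mat "br_block V r" k m
    using V.br_block_coercive n by (simp add: k_def)
  define P where "P = mat_inv V"
  define Q where "Q = mat_inv (br_block V r)"
  define U where "U = Q * mat k r (\<lambda>(i, j). V $$ (i + r, j))"
  define P11 where "P11 = mat r r (\<lambda>ij. P $$ ij)"
  have P: "P \<in> carrier_mat (r + k) (r + k)" and Q: "Q \<in> carrier_mat k k"
    using V.mat_inv_carrier V22.mat_inv_carrier nk by (simp_all add: P_def Q_def)
  have V_bounds: "m \<le> V $$ (i, j)" "V $$ (i, j) \<le> M" if "i < n" "j < n" "i \<noteq> j" for i j
    using VL that by (auto simp: class_L_def)
  have U: "U \<in> carrier_mat k r" and P11: "P11 \<in> carrier_mat r r"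
    using Q by (simp_all add: U_def P11_def)
  have diff: "br_block P r - Q = U * P11 * transpose_mat U"
    using symmetric_inverse_lower_right_block[OF _ sym P _ _ Q] V.carrier nk
      V.mult_mat_inv V.mat_inv_mult V22.mult_mat_inv V22.mat_inv_mult
    by (simp add: P_def Q_def U_def P11_def)
  have U_bound: "\<bar>U $$ (i, l)\<bar> \<le> \<beta>" if "i < k" "l < r" for i l
    unfolding U_def Q_def \<beta>_def
  proof (rule V22.mat_inv_mult_entry_bound[OF _ _ _ _ _ that])
    show "br_block V r $$ (i, j) \<le> M" if "i < k" "j < k" "i \<noteq> j" for i j
      using V_bounds[of "i + r" "j + r"] that V.carrier nk by (simp add: br_block_def)
    show "(real n - 1) * m \<le> br_block V r $$ (i, i)" if "i < k" for i
      using class_L_diag_lower[OF VL, of "i + r"] that V.carrier nk by (simp add: br_block_def)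
    show "\<bar>mat k r (\<lambda>(i, j). V $$ (i + r, j)) $$ (i, j)\<bar> \<le> M" if "i < k" "j < r" for i j
      using V_bounds[of "i + r" j] that nk m by simp
  qed (use n m in auto)
  have P11_bound: "\<bar>P11 $$ (i, j)\<bar> \<le> \<gamma>" if "i < r" "j < r" for i j
    using V.mat_inv_entry_bound[of i j] that nk by (simp add: P11_def P_def \<gamma>_def)
  have UP11_bound: "\<bar>(U * P11) $$ (i, l)\<bar> \<le> real r * \<beta> * \<gamma>" if "i < k" "l < r" for i l
    by (rule abs_mult_entry_le[OF U P11 that]) (use U_bound P11_bound that in auto)
  have "\<bar>(br_block P r - Q) $$ (i, j)\<bar> \<le> real r * (real r * \<beta> * \<gamma>) * \<beta>"
    if "i < k" "j < k" for i j
    unfolding diff by (rule abs_mult_entry_le[where k = r]) (use U P11 that U_bound UP11_bound in auto)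
  moreover have "br_block (mat_inv V - inv_diag V) r - (mat_inv (br_block V r) - inv_diag (br_block V r))
      = br_block P r - Q"
    using br_block_minus_inv_diag[of V n P Q r] V.carrier P Q nk by (simp add: P_def Q_def)
  ultimately show ?thesis
    unfolding \<beta>_def[symmetric] \<gamma>_def[symmetric] using Q k
    by (intro max_norm_le) (auto simp: power2_eq_square ac_simps)
qed

theorem lemma10:
  fixes r :: nat
  assumes "r > 0"
  shows "\<exists>C::real. \<forall>b c :: nat \<Rightarrow> real. (\<forall>n. 0 < c n \<and> c n \<le> b n) \<longrightarrow>
    (\<exists>N. \<forall>n\<ge>N. \<forall>V. n \<ge> 3 \<and> n > r \<and> V \<in> class_L n (1 / b n) (1 / c n) \<and> transpose_mat V = V \<longrightarrow>
       max_norm (br_block (mat_inv V - inv_diag V) r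
                 - (mat_inv (br_block V r) - inv_diag (br_block V r)))
         \<le> C * b n ^ 6 / (real n ^ 3 * c n ^ 5))"
proof (intro exI[of _ "112 * real r ^ 2"] allI impI exI[of _ "r + 3"])
  fix b c :: "nat \<Rightarrow> real" and n V
  assume bc: "\<forall>n. 0 < c n \<and> c n \<le> b n" and "r + 3 \<le> n"
    and "3 \<le> n \<and> r < n \<and> V \<in> class_L n (1 / b n) (1 / c n) \<and> transpose_mat V = V"
  then have "max_norm (br_block (mat_inv V - inv_diag V) r
        - (mat_inv (br_block V r) - inv_diag (br_block V r)))
      \<le> real r ^ 2 * (112 * b n ^ 6 / (real n ^ 3 * c n ^ 5))"
    using class_L_bound_le_b6_n3_c5[of "c n" "b n" n]
    by (intro order_trans[OF class_L_br_block_inverse_bound[of V n "1 / b n" "1 / c n" r]] mult_left_mono)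
      (auto intro: divide_pos_pos less_le_trans)
  then show "max_norm (br_block (mat_inv V - inv_diag V) r
        - (mat_inv (br_block V r) - inv_diag (br_block V r)))
      \<le> 112 * real r ^ 2 * b n ^ 6 / (real n ^ 3 * c n ^ 5)"
    by (simp add: mult.commute mult.left_commute)
qed

end
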